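(* Let $X$ be a compact, finite-dimensional metrizable space. Let $Q$ be the set of all $d\in\mathrm{Met}(X)$ such that $(X,d)$ is isometrically embeddable into $(\mathbb{R}^N,\|\cdot\|_\infty)$ for some integer $N\ge1$, where $\|\cdot\|_\infty$ is the $\ell^\infty$-norm. Then $Q$ is dense in $(\mathrm{Met}(X),\mathcal{D}_X)$.
   Context: $\mathrm{Met}(X)$ is the set of all metrics on $X$ generating its topology, and $\mathcal{D}_X(d,e)=\sup_{x,y\in X}|d(x,y)-e(x,y)|$. Finite-dimensional means finite covering dimension. *)

theory Defs
  imports "HOL-Analysis.Analysis"
begin

definition Met :: "'a topology \<Rightarrow> ('a \<Rightarrow> 'a \<Rightarrow> real) set" where
  "Met T = {d. Metric_space (topspace T) d \<and> Metric_space.mtopology (topspace T) d = T}"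

definition DX :: "'a topology \<Rightarrow> ('a \<Rightarrow> 'a \<Rightarrow> real) \<Rightarrow> ('a \<Rightarrow> 'a \<Rightarrow> real) \<Rightarrow> ereal" where
  "DX T d e = (SUP p \<in> topspace T \<times> topspace T. ereal \<bar>d (fst p) (snd p) - e (fst p) (snd p)\<bar>)"

definition covering_dim_le :: "'a topology \<Rightarrow> nat \<Rightarrow> bool" where
  "covering_dim_le T n \<longleftrightarrow>
     (\<forall>\<U>. finite \<U> \<and> (\<forall>U\<in>\<U>. openin T U) \<and> \<Union>\<U> = topspace T \<longrightarrow>
        (\<exists>\<V>. finite \<V> \<and> (\<forall>V\<in>\<V>. openin T V) \<and> \<Union>\<V> = topspace T \<and>
             (\<forall>V\<in>\<V>. \<exists>U\<in>\<U>. V \<subseteq> U) \<and>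
             (\<forall>x\<in>topspace T. card {V\<in>\<V>. x \<in> V} \<le> n + 1)))"

definition finite_dimensional :: "'a topology \<Rightarrow> bool" where
  "finite_dimensional T \<longleftrightarrow> (\<exists>n. covering_dim_le T n)"

text \<open>(X,d) isometrically embeds into (R^N, sup-norm) for some N \<ge> 1;
  R^N is represented by functions nat \<Rightarrow> real restricted to indices < N.\<close>
definition linf_embeddable :: "'a topology \<Rightarrow> ('a \<Rightarrow> 'a \<Rightarrow> real) \<Rightarrow> bool" where
  "linf_embeddable T d \<longleftrightarrow>
     (\<exists>N::nat. N \<ge> 1 \<and> (\<exists>f :: 'a \<Rightarrow> nat \<Rightarrow> real.
        \<forall>x\<in>topspace T. \<forall>y\<in>topspace T. d x y = (MAX i\<in>{..<N}. \<bar>f x i - f y i\<bar>)))"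

end

theory Submission
  imports Defs
begin

text \<open>By the Menger-Noebeling theorem, a compact metric space \<open>(X, d)\<close> of covering dimension \<open>\<le> n\<close>
  admits a continuous injection \<open>g\<close> into \<open>\<real>\<^sup>2\<^sup>n\<^sup>+\<^sup>1\<close>: maps into nerves of fine covers with vertices in
  general position are \<open>r\<close>-maps, and a uniformly convergent sequence of ever finer such maps has an
  injective limit. Given \<open>\<epsilon>\<close>, take an \<open>\<epsilon>/2\<close>-net \<open>p\<^sub>1, \<dots>, p\<^sub>m\<close> and the coordinates
  \<open>x \<mapsto> (d(x, p\<^sub>1), \<dots>, d(x, p\<^sub>m), \<epsilon>/2 \<cdot> g(x))\<close>. They are continuous and injective, so their
  \<open>\<ell>\<^sup>\<infinity>\<close>-distance is a metric generating the compact topology of \<open>X\<close>; the first block keeps it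
  within \<open>\<epsilon>\<close> below \<open>d\<close> and the second block raises it by at most \<open>\<epsilon>\<close>.\<close>

section \<open>Points in general position\<close>

lemma exists_nonzero_orthogonal:
  fixes Q :: "(nat \<Rightarrow> real) set"
  assumes "finite Q" "card Q < K"
  shows "\<exists>c. (\<exists>i<K. c i \<noteq> 0) \<and> (\<forall>q\<in>Q. (\<Sum>i<K. c i * q i) = 0)"
  using assms
proof (induction "card Q" arbitrary: Q K rule: less_induct)
  case less
  obtain k where K: "K = Suc k" using less.prems by (cases K) auto
  show ?case
  proof (cases "\<forall>q\<in>Q. q k = 0")
    case True
    have "(\<Sum>i<K. (if i = k then 1 else 0) * q i) = q k" for q :: "nat \<Rightarrow> real"
      by (simp add: K if_distrib cong: if_cong)
    with True K show ?thesis by (intro exI[of _ "\<lambda>i. if i = k then 1 else 0"]) auto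
  next
    case False
    then obtain p where p: "p \<in> Q" "p k \<noteq> 0" by auto
    text \<open>Eliminate the last coordinate with the pivot \<open>p\<close> and recurse on the remaining points.\<close>
    define F where "F = (\<lambda>q i. p k * q i - q k * p i) ` (Q - {p})"
    have "card F \<le> card (Q - {p})" unfolding F_def using less.prems by (simp add: card_image_le)
    then have cF: "card F < card Q" "card F < k"
      using p less.prems K card_gt_0_iff[of Q] by (auto simp: card_Diff_singleton)
    obtain c' where c': "\<exists>i<k. c' i \<noteq> 0" "\<forall>q\<in>F. (\<Sum>i<k. c' i * q i) = 0"
      using less.hyps[OF cF(1) _ cF(2)] less.prems by (auto simp: F_def)
    define S where "S q = (\<Sum>i<k. c' i * q i)" for q :: "nat \<Rightarrow> real"
    define c where "c i = (if i < k then c' i else - S p / p k)" for i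
    have sum_c: "(\<Sum>i<K. c i * q i) = S q - S p / p k * q k" for q
      by (simp add: K c_def S_def)
    have "(\<Sum>i<K. c i * q i) = 0" if q: "q \<in> Q" for q
    proof (cases "q = p")
      case False
      with q have "(\<Sum>i<k. c' i * (p k * q i - q k * p i)) = 0" using c' by (auto simp: F_def)
      then have "p k * S q - q k * S p = 0"
        by (simp add: S_def algebra_simps sum_subtractf sum_distrib_left)
      then have "S q = S p / p k * q k" using p by (simp add: field_simps)
      then show ?thesis using sum_c by simp
    qed (use sum_c p in simp)
    moreover have "\<exists>i<K. c i \<noteq> 0" using c' K by (auto simp: c_def)
    ultimately show ?thesis by blast
  qed
qed

lemma exists_hyperplane_through:
  fixes Q :: "(nat \<Rightarrow> real) set"
  assumes "finite Q" "card Q \<le> N" "N \<ge> 1"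
  shows "\<exists>c b. (\<exists>i<N. c i \<noteq> 0) \<and> (\<forall>q\<in>Q. (\<Sum>i<N. c i * q i) = b)"
proof (cases "Q = {}")
  case True
  with assms show ?thesis by (intro exI[of _ "\<lambda>_. 1"] exI[of _ 0]) (auto intro: exI[of _ 0])
next
  case False
  text \<open>Homogenise: append the coordinate 1 at index \<open>N\<close>.\<close>
  have "card ((\<lambda>q. q(N := 1)) ` Q) < Suc N"
    using assms card_image_le[OF assms(1), of "\<lambda>q. q(N := 1)"] by linarith
  then obtain c where c: "\<exists>i<Suc N. c i \<noteq> 0" "\<forall>q\<in>Q. (\<Sum>i<Suc N. c i * (q(N := 1)) i) = 0"
    using exists_nonzero_orthogonal[of "(\<lambda>q. q(N := 1)) ` Q" "Suc N"] assms(1) by auto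
  have "(\<Sum>i<Suc N. c i * (q(N := 1)) i) = (\<Sum>i<N. c i * q i) + c N" for q
    by (simp add: sum.cong[OF refl, of "{..<N}" "\<lambda>i. c i * (q(N := 1)) i"])
  with c(2) have hq: "\<forall>q\<in>Q. (\<Sum>i<N. c i * q i) = - c N" by (auto simp: add_eq_0_iff)
  have "\<exists>i<N. c i \<noteq> 0"
  proof (rule ccontr)
    assume "\<not> ?thesis"
    moreover obtain q where "q \<in> Q" using False by auto
    ultimately have "c N = 0" using hq by auto
    with \<open>\<not> ?thesis\<close> c(1) show False using less_Suc_eq by auto
  qed
  with hq show ?thesis by blast
qed

text \<open>Points near \<open>a\<close> on the moment curve \<open>a + (t, t\<^sup>2, \<dots>, t\<^sup>N)\<close> meet each hyperplane in at most
  \<open>N\<close> parameters \<open>t\<close>, so all but finitely many small \<open>t\<close> avoid the given hyperplanes.\<close>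
lemma exists_near_point_off_hyperplanes:
  fixes a :: "nat \<Rightarrow> real"
  assumes "finite H" "\<forall>(c, b)\<in>H. \<exists>i<N. c i \<noteq> 0" "\<eta> > 0"
  shows "\<exists>w. (\<forall>i<N. \<bar>w i - a i\<bar> < \<eta>) \<and> (\<forall>(c, b)\<in>H. (\<Sum>i<N. c i * w i) \<noteq> b)"
proof -
  define Z where "Z = (\<lambda>(c, b). {t::real. (\<Sum>i<N. c i * (a i + t ^ Suc i)) = b})"
  have "finite (Z h)" if hH: "h \<in> H" for h
  proof -
    obtain c b where h: "h = (c, b)" by fastforce
    define co where "co k = (if k = 0 then (\<Sum>i<N. c i * a i) - b else c (k - 1))" for k
    have "(\<Sum>k\<le>N. co k * t ^ k) = co 0 + (\<Sum>i<N. co (Suc i) * t ^ Suc i)" for t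
      by (subst sum.atMost_shift) simp
    then have "(\<Sum>k\<le>N. co k * t ^ k) = (\<Sum>i<N. c i * (a i + t ^ Suc i)) - b" for t
      by (simp add: co_def distrib_left sum.distrib)
    then have "Z h = {t. (\<Sum>k\<le>N. co k * t ^ k) = 0}"
      by (simp add: Z_def h)
    moreover obtain i where "i < N" "c i \<noteq> 0" using assms(2) hH h by auto
    then have "\<exists>k\<le>N. co k \<noteq> 0" by (intro exI[of _ "Suc i"]) (auto simp: co_def)
    ultimately show ?thesis by (simp only: polyfun_finite_roots)
  qed
  with assms(1) have "finite (\<Union>(Z ` H))" by blast
  moreover have "infinite {0<..<min 1 \<eta>}" using assms(3) by simp
  ultimately obtain t where t: "t \<in> {0<..<min 1 \<eta>}" "t \<notin> \<Union>(Z ` H)"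
    by (metis Diff_iff Diff_infinite_finite finite.emptyI ex_in_conv)
  have "\<bar>t ^ Suc i\<bar> < \<eta>" for i
  proof -
    have "t * t ^ i \<le> t" using t(1) by (intro mult_left_le power_le_one) auto
    moreover have "\<bar>t ^ Suc i\<bar> = t * t ^ i" using t(1) by simp
    moreover have "t < \<eta>" using t(1) by simp
    ultimately show ?thesis by linarith
  qed
  with t(2) show ?thesis
    by (intro exI[of _ "\<lambda>i. a i + t ^ Suc i"]) (auto simp: Z_def)
qed

definition general_position :: "nat \<Rightarrow> 'i set \<Rightarrow> ('i \<Rightarrow> nat \<Rightarrow> real) \<Rightarrow> bool" where
  "general_position N I v \<longleftrightarrow> (\<forall>J\<subseteq>I. card J \<le> N + 1 \<longrightarrow> (\<forall>l. (\<Sum>j\<in>J. l j) = 0 \<and>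
      (\<forall>i<N. (\<Sum>j\<in>J. l j * v j i) = 0) \<longrightarrow> (\<forall>j\<in>J. l j = 0)))"

lemma general_positionD:
  "general_position N I v \<Longrightarrow> J \<subseteq> I \<Longrightarrow> card J \<le> N + 1 \<Longrightarrow> (\<Sum>j\<in>J. l j) = 0 \<Longrightarrow>
   (\<forall>i<N. (\<Sum>j\<in>J. l j * v j i) = 0) \<Longrightarrow> j \<in> J \<Longrightarrow> l j = 0"
  unfolding general_position_def by blast

lemma general_position_insert:
  assumes gp: "general_position N I v" and "finite I"
    and w: "\<And>J \<mu>. J \<subseteq> I \<Longrightarrow> card J \<le> N \<Longrightarrow> sum \<mu> J = 1 \<Longrightarrow>
              \<exists>i<N. w i \<noteq> (\<Sum>j\<in>J. \<mu> j * v j i)"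
  shows "general_position N (insert j0 I) (v(j0 := w))"
  unfolding general_position_def
proof (intro allI impI ballI)
  fix J l j
  assume J: "J \<subseteq> insert j0 I" "card J \<le> N + 1"
    and l: "(\<Sum>j\<in>J. l j) = 0 \<and> (\<forall>i<N. (\<Sum>j\<in>J. l j * (v(j0 := w)) j i) = 0)" and j: "j \<in> J"
  have fJ: "finite J" using J \<open>finite I\<close> finite_subset by auto
  show "l j = 0"
  proof (cases "j0 \<in> J")
    case False
    then have "(\<Sum>j\<in>J. l j * (v(j0 := w)) j i) = (\<Sum>j\<in>J. l j * v j i)" for i
      by (intro sum.cong) auto
    with False J l j show ?thesis using general_positionD[OF gp, of J l j] by auto
  next
    case True
    define J' where "J' = J - {j0}"
    have J': "J' \<subseteq> I" "card J' \<le> N" using J True fJ by (auto simp: J'_def)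
    have s1: "(\<Sum>j\<in>J'. l j) = - l j0"
      using l sum.remove[OF fJ True, of l] by (simp add: J'_def)
    have "(\<Sum>j\<in>J'. l j * (v(j0 := w)) j i) = (\<Sum>j\<in>J'. l j * v j i)" for i
      by (rule sum.cong) (auto simp: J'_def)
    then have s2: "(\<Sum>j\<in>J'. l j * v j i) = - (l j0 * w i)" if "i < N" for i
      using l that sum.remove[OF fJ True, of "\<lambda>j. l j * (v(j0 := w)) j i"] by (simp add: J'_def)
    have l0: "l j0 = 0"
    proof (rule ccontr)
      assume nz: "l j0 \<noteq> 0"
      text \<open>Otherwise \<open>w\<close> is an affine combination of at most \<open>N\<close> of the other points.\<close>
      have "sum (\<lambda>j. - l j / l j0) J' = 1"
        using s1 nz by (simp add: sum_divide_distrib[symmetric] sum_negf)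
      moreover have "w i = (\<Sum>j\<in>J'. (- l j / l j0) * v j i)" if "i < N" for i
        using s2[OF that] nz by (simp add: sum_divide_distrib[symmetric] sum_negf field_simps)
      ultimately show False using w[OF J'] by blast
    qed
    have "(\<Sum>j\<in>J'. l j) = 0" "\<forall>i<N. (\<Sum>j\<in>J'. l j * v j i) = 0"
      using s1 s2 l0 by auto
    with j J' l0 show ?thesis using general_positionD[OF gp, of J' l j] by (auto simp: J'_def)
  qed
qed

lemma exists_near_general_position:
  fixes a :: "'i \<Rightarrow> nat \<Rightarrow> real"
  assumes "finite I" "\<eta> > 0" "N \<ge> 1"
  shows "\<exists>v. (\<forall>j\<in>I. \<forall>i<N. \<bar>v j i - a j i\<bar> < \<eta>) \<and> general_position N I v"
  using assms(1)
proof (induction I rule: finite_induct)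
  case empty
  then show ?case by (auto simp: general_position_def)
next
  case (insert j0 I)
  obtain v where v: "\<forall>j\<in>I. \<forall>i<N. \<bar>v j i - a j i\<bar> < \<eta>" "general_position N I v"
    using insert.IH by blast
  define Fam where "Fam = {J. J \<subseteq> I \<and> card J \<le> N}"
  have "finite Fam" using insert.hyps(1) by (simp add: Fam_def)
  have "\<exists>c b. (\<exists>i<N. c i \<noteq> 0) \<and> (\<forall>j\<in>J. (\<Sum>i<N. c i * v j i) = b)" if "J \<in> Fam" for J
  proof -
    have "finite J" using that insert.hyps(1) finite_subset by (auto simp: Fam_def)
    then have "card (v ` J) \<le> N" using that card_image_le[of J v] by (auto simp: Fam_def)
    then show ?thesis using exists_hyperplane_through[of "v ` J" N] \<open>finite J\<close> assms(3) by auto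
  qed
  then obtain c b where cb: "\<And>J. J \<in> Fam \<Longrightarrow> (\<exists>i<N. c J i \<noteq> 0) \<and> (\<forall>j\<in>J. (\<Sum>i<N. c J i * v j i) = b J)"
    by metis
  obtain w where w: "\<forall>i<N. \<bar>w i - a j0 i\<bar> < \<eta>" "\<forall>J\<in>Fam. (\<Sum>i<N. c J i * w i) \<noteq> b J"
    using exists_near_point_off_hyperplanes[of "(\<lambda>J. (c J, b J)) ` Fam" N \<eta> "a j0"]
      \<open>finite Fam\<close> cb assms(2) by auto
  have "general_position N (insert j0 I) (v(j0 := w))"
  proof (rule general_position_insert[OF v(2) insert.hyps(1)])
    fix J and \<mu> :: "'i \<Rightarrow> real" assume J: "J \<subseteq> I" "card J \<le> N" and \<mu>: "sum \<mu> J = 1"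
    then have "J \<in> Fam" by (simp add: Fam_def)
    have "(\<Sum>i<N. c J i * w i) = b J" if wJ: "\<forall>i<N. w i = (\<Sum>j\<in>J. \<mu> j * v j i)"
    proof -
      have "(\<Sum>i<N. c J i * w i) = (\<Sum>i<N. c J i * (\<Sum>j\<in>J. \<mu> j * v j i))"
        using wJ by (intro sum.cong) auto
      also have "\<dots> = (\<Sum>j\<in>J. \<mu> j * (\<Sum>i<N. c J i * v j i))"
        by (simp add: sum_distrib_left sum.swap[of _ J] mult.left_commute)
      also have "\<dots> = b J" using cb[OF \<open>J \<in> Fam\<close>] \<mu> by (simp add: sum_distrib_right[symmetric])
      finally show ?thesis .
    qed
    then show "\<exists>i<N. w i \<noteq> (\<Sum>j\<in>J. \<mu> j * v j i)"
      using w(2) \<open>J \<in> Fam\<close> by blast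
  qed
  moreover have "\<forall>j\<in>insert j0 I. \<forall>i<N. \<bar>(v(j0 := w)) j i - a j i\<bar> < \<eta>"
    using v(1) w(1) by simp
  ultimately show ?case by blast
qed

lemma abs_convex_combination_diff_le:
  fixes w u :: "'i \<Rightarrow> real"
  assumes "finite A" "\<And>a. 0 \<le> w a" "sum w A = 1" "\<And>a. a \<in> A \<Longrightarrow> w a \<noteq> 0 \<Longrightarrow> \<bar>u a - c\<bar> \<le> \<eta>"
  shows "\<bar>(\<Sum>a\<in>A. w a * u a) - c\<bar> \<le> \<eta>"
proof -
  have "(\<Sum>a\<in>A. w a * u a) - c = (\<Sum>a\<in>A. w a * (u a - c))"
    using assms(3) by (simp add: right_diff_distrib sum_subtractf flip: sum_distrib_right)
  also have "\<bar>\<dots>\<bar> \<le> (\<Sum>a\<in>A. w a * \<eta>)"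
  proof (intro order.trans[OF sum_abs] sum_mono)
    fix a assume "a \<in> A"
    then show "\<bar>w a * (u a - c)\<bar> \<le> w a * \<eta>"
      using assms(2)[of a] assms(4)[of a] by (cases "w a = 0") (auto simp: abs_mult intro: mult_left_mono)
  qed
  also have "\<dots> = \<eta>" using assms(3) by (simp flip: sum_distrib_right)
  finally show ?thesis .
qed

section \<open>Coordinate maps and sup-metrics\<close>

definition continuous_coords :: "'a topology \<Rightarrow> nat \<Rightarrow> ('a \<Rightarrow> nat \<Rightarrow> real) \<Rightarrow> bool" where
  "continuous_coords X N g \<longleftrightarrow> (\<forall>i<N. continuous_map X euclideanreal (\<lambda>x. g x i))"

lemma continuous_map_sum_abs_diff_coords:
  assumes "continuous_coords X N g" "continuous_coords X N h"
  shows "continuous_map X euclideanreal (\<lambda>x. \<Sum>i<N. \<bar>g x i - h x i\<bar>)"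
  using assms unfolding continuous_coords_def
  by (intro continuous_map_sum continuous_map_real_abs continuous_map_diff) auto

lemma abs_diff_Max_le:
  fixes a :: "nat \<Rightarrow> real"
  assumes "\<forall>j<N. a j \<le> c + \<epsilon>" and "\<exists>j<N. c - \<epsilon> \<le> a j"
  shows "\<bar>c - (MAX j\<in>{..<N}. a j)\<bar> \<le> \<epsilon>"
proof -
  obtain j where j: "j < N" "c - \<epsilon> \<le> a j" using assms(2) by blast
  then have "{..<N} \<noteq> {}" by (auto simp: lessThan_empty_iff)
  then have "(MAX j\<in>{..<N}. a j) \<le> c + \<epsilon>" using assms(1) by (subst Max_le_iff) auto
  moreover have "a j \<le> (MAX j\<in>{..<N}. a j)" using j by (intro Max_ge) auto
  ultimately show ?thesis unfolding abs_le_iff using j by linarith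
qed

lemma Metric_space_Max_coords:
  fixes f :: "'a \<Rightarrow> nat \<Rightarrow> real"
  assumes N: "N \<ge> 1" and inj: "\<forall>x\<in>X. \<forall>y\<in>X. (\<forall>j<N. f x j = f y j) \<longrightarrow> x = y"
  shows "Metric_space X (\<lambda>x y. MAX j\<in>{..<N}. \<bar>f x j - f y j\<bar>)"
proof
  define e where "e x y = (MAX j\<in>{..<N}. \<bar>f x j - f y j\<bar>)" for x y
  have ne: "{..<N} \<noteq> {}" using N by (simp add: lessThan_empty_iff)
  have ge: "\<bar>f x j - f y j\<bar> \<le> e x y" if "j < N" for x y j
    unfolding e_def by (rule Max_ge) (use that in auto)
  have le: "e x y \<le> c \<longleftrightarrow> (\<forall>j<N. \<bar>f x j - f y j\<bar> \<le> c)" for x y c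
    unfolding e_def using ne by (subst Max_le_iff) auto
  fix x y z
  show "0 \<le> e x y" using ge[of 0 x y] N by linarith
  show "e x y = e y x" unfolding e_def by (simp add: abs_minus_commute)
  show "e x z \<le> e x y + e y z"
    unfolding le using ge[of _ x y] ge[of _ y z] by (smt (verit))
  assume "x \<in> X" "y \<in> X"
  then show "(e x y = 0) = (x = y)"
    using inj ge[of _ x y] le[of x y 0] \<open>0 \<le> e x y\<close> by (smt (verit) abs_le_zero_iff)
qed

text \<open>The identity from the compact space onto the Hausdorff metric topology is a homeomorphism.\<close>
lemma Max_coords_in_Met:
  fixes T :: "'a topology" and f :: "'a \<Rightarrow> nat \<Rightarrow> real"
  assumes cpt: "compact_space T" and N: "N \<ge> 1" and cont: "continuous_coords T N f"
    and inj: "\<forall>x\<in>topspace T. \<forall>y\<in>topspace T. (\<forall>j<N. f x j = f y j) \<longrightarrow> x = y"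
  shows "(\<lambda>x y. MAX j\<in>{..<N}. \<bar>f x j - f y j\<bar>) \<in> Met T"
proof -
  define e where "e x y = (MAX j\<in>{..<N}. \<bar>f x j - f y j\<bar>)" for x y
  interpret E: Metric_space "topspace T" e
    unfolding e_def by (rule Metric_space_Max_coords[OF N inj])
  have le: "e x y \<le> c" if "\<forall>j<N. \<bar>f x j - f y j\<bar> \<le> c" for x y c
    unfolding e_def using that N by (subst Max_le_iff) (auto simp: lessThan_empty_iff)
  have "T = E.mtopology"
  proof (rule compact_Hausdorff_space_optimal)
    fix U assume U: "openin E.mtopology U"
    show "openin T U"
      unfolding openin_subopen[of T U]
    proof
      fix x assume "x \<in> U"
      then obtain r where r: "r > 0" "E.mball x r \<subseteq> U" and x: "x \<in> topspace T"
        using U E.openin_mtopology by blast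
      define S where "S y = (\<Sum>j<N. \<bar>f y j - f x j\<bar>)" for y
      have "continuous_map T euclideanreal S"
        unfolding S_def using continuous_map_sum_abs_diff_coords[OF cont, of "\<lambda>_. f x"]
        by (simp add: continuous_coords_def)
      then have "openin T {y \<in> topspace T. S y \<in> {..<r}}"
        by (rule openin_continuous_map_preimage) simp
      moreover have "{y \<in> topspace T. S y \<in> {..<r}} \<subseteq> E.mball x r"
      proof
        fix y assume y: "y \<in> {y \<in> topspace T. S y \<in> {..<r}}"
        have "e x y \<le> S y"
          unfolding S_def by (rule le) (auto simp: abs_minus_commute intro: member_le_sum)
        with x y show "y \<in> E.mball x r" by simp
      qed
      with r(2) have "{y \<in> topspace T. S y \<in> {..<r}} \<subseteq> U" by blast
      moreover have "x \<in> {y \<in> topspace T. S y \<in> {..<r}}" using x r by (simp add: S_def)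
      ultimately show "\<exists>W. openin T W \<and> x \<in> W \<and> W \<subseteq> U" by blast
    qed
  qed (simp_all add: cpt E.Hausdorff_space_mtopology)
  then show ?thesis
    unfolding Met_def e_def[symmetric] using E.Metric_space_axioms by simp
qed

section \<open>The Menger-Noebeling embedding theorem\<close>

lemma halving_imp_LIMSEQ_zero:
  fixes \<rho> :: "nat \<Rightarrow> real"
  assumes halve: "\<And>k. \<rho> (Suc k) \<le> \<rho> k / 2" and nonneg: "\<And>k. 0 \<le> \<rho> k"
  shows "\<rho> \<longlonglongrightarrow> 0"
proof -
  have \<rho>_le: "\<rho> k \<le> \<rho> 0 * (1 / 2) ^ k" for k
  proof (induction k)
    case (Suc k)
    have "\<rho> (Suc k) \<le> \<rho> k / 2" by (rule halve)
    also have "\<dots> \<le> \<rho> 0 * (1 / 2) ^ k / 2" using Suc by simp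
    finally show ?case by simp
  qed simp
  have "(\<lambda>k. \<rho> 0 * (1 / 2) ^ k) \<longlonglongrightarrow> 0"
    by (rule tendsto_mult_right_zero[OF LIMSEQ_realpow_zero]) simp_all
  then show ?thesis
    by (rule tendsto_sandwich[of "\<lambda>_. 0" \<rho> _ "\<lambda>k. \<rho> 0 * (1 / 2) ^ k", rotated 3])
      (use nonneg \<rho>_le in auto)
qed

lemma halving_steps_limit:
  fixes a :: "nat \<Rightarrow> real"
  assumes step: "\<And>k. \<bar>a (Suc k) - a k\<bar> \<le> \<rho> k" and halve: "\<And>k. \<rho> (Suc k) \<le> \<rho> k / 2"
  shows "a \<longlonglongrightarrow> lim a" and "\<bar>lim a - a k\<bar> \<le> 2 * \<rho> k"
proof -
  have tele: "\<bar>a m - a k\<bar> \<le> 2 * \<rho> k - 2 * \<rho> m" if "k \<le> m" for k m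
    using that
  proof (induction m rule: dec_induct)
    case (step m)
    then show ?case using assms[of m] by linarith
  qed simp
  have \<rho>_nonneg: "0 \<le> \<rho> k" for k using step[of k] by linarith
  have "\<rho> \<longlonglongrightarrow> 0" using halving_imp_LIMSEQ_zero[of \<rho>, OF halve \<rho>_nonneg] .
  have "Cauchy a"
  proof (rule CauchyI)
    fix e :: real assume "e > 0"
    then obtain k0 where "\<forall>k\<ge>k0. norm (\<rho> k - 0) < e / 4"
      using LIMSEQ_D[OF \<open>\<rho> \<longlonglongrightarrow> 0\<close>, of "e / 4"] by auto
    then have k: "\<rho> k0 < e / 4" by auto
    have "norm (a m - a n) < e" if "k0 \<le> m" "k0 \<le> n" for m n
      using tele[OF that(1)] tele[OF that(2)] \<rho>_nonneg[of m] \<rho>_nonneg[of n] k by simp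
    then show "\<exists>K. \<forall>m\<ge>K. \<forall>n\<ge>K. norm (a m - a n) < e" by blast
  qed
  then show lim: "a \<longlonglongrightarrow> lim a" by (simp add: Cauchy_convergent_iff convergent_LIMSEQ_iff)
  show "\<bar>lim a - a k\<bar> \<le> 2 * \<rho> k"
  proof (rule LIMSEQ_le_const2)
    show "(\<lambda>m. \<bar>a m - a k\<bar>) \<longlonglongrightarrow> \<bar>lim a - a k\<bar>"
      by (intro tendsto_rabs tendsto_diff lim tendsto_const)
    show "\<exists>K. \<forall>m\<ge>K. \<bar>a m - a k\<bar> \<le> 2 * \<rho> k"
    proof (intro exI[of _ k] allI impI)
      fix m assume "k \<le> m"
      then show "\<bar>a m - a k\<bar> \<le> 2 * \<rho> k" using tele[of k m] \<rho>_nonneg[of m] by linarith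
    qed
  qed
qed

context Metric_space
begin

lemma Lipschitz_imp_continuous_map_real:
  assumes "\<forall>x\<in>M. \<forall>y\<in>M. \<bar>f x - f y\<bar> \<le> L * d x y"
  shows "continuous_map mtopology euclideanreal f"
proof -
  have "continuous_map mtopology Met_TC.mtopology f"
    unfolding metric_continuous_map[OF Met_TC.Metric_space_axioms]
  proof (intro conjI ballI allI impI)
    fix a and e :: real assume a: "a \<in> M" and e: "e > 0"
    show "\<exists>\<delta>>0. \<forall>x. x \<in> M \<and> d a x < \<delta> \<longrightarrow> dist (f a) (f x) < e"
    proof (intro exI[of _ "e / (\<bar>L\<bar> + 1)"] conjI allI impI)
      fix x assume x: "x \<in> M \<and> d a x < e / (\<bar>L\<bar> + 1)"
      have "\<bar>f a - f x\<bar> \<le> L * d a x" using assms a x by blast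
      also have "\<dots> \<le> (\<bar>L\<bar> + 1) * d a x" by (intro mult_right_mono) auto
      also have "\<dots> < (\<bar>L\<bar> + 1) * (e / (\<bar>L\<bar> + 1))"
        using x by (intro mult_strict_left_mono) auto
      also have "\<dots> = e" by simp
      finally show "dist (f a) (f x) < e" by (simp add: dist_real_def)
    qed (use e in simp)
  qed auto
  then show ?thesis by simp
qed

text \<open>\<open>min 1 (d x (M - V))\<close>; the cap \<open>1\<close> avoids the junk value \<open>Inf {}\<close> when \<open>V \<supseteq> M\<close>.\<close>
definition bump :: "'a set \<Rightarrow> 'a \<Rightarrow> real" where
  "bump V x = Inf (insert 1 (d x ` (M - V)))"

lemma bdd_below_bump_set: "bdd_below (insert 1 (d x ` (M - V)))"
  by (rule bdd_belowI[of _ 0]) auto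

lemma bump_nonneg: "0 \<le> bump V x"
  unfolding bump_def by (rule cInf_greatest) auto

lemma bump_le_dist: "y \<in> M - V \<Longrightarrow> bump V x \<le> d x y"
  unfolding bump_def by (rule cInf_lower[OF _ bdd_below_bump_set]) blast

lemma bump_le_1: "bump V x \<le> 1"
  unfolding bump_def by (rule cInf_lower[OF _ bdd_below_bump_set]) blast

lemma bump_eq_0: "x \<in> M - V \<Longrightarrow> bump V x = 0"
  using bump_le_dist[of x V x] bump_nonneg[of V x] by simp

lemma bump_pos:
  assumes "openin mtopology V" "x \<in> V"
  shows "bump V x > 0"
proof -
  obtain r where r: "r > 0" "mball x r \<subseteq> V" using assms openin_mtopology by blast
  have "x \<in> M" using assms openin_mtopology by blast
  have "min 1 r \<le> bump V x"
    unfolding bump_def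
  proof (rule cInf_greatest)
    fix z assume "z \<in> insert 1 (d x ` (M - V))"
    then consider "z = 1" | y where "y \<in> M - V" "z = d x y" by blast
    then show "min 1 r \<le> z"
    proof cases
      case 2
      then have "y \<notin> mball x r" using r by blast
      with 2 \<open>x \<in> M\<close> show ?thesis by auto
    qed simp
  qed simp
  then show ?thesis using r by linarith
qed

lemma bump_Lipschitz:
  assumes "x \<in> M" "x' \<in> M"
  shows "bump V x \<le> bump V x' + d x x'"
proof -
  have "bump V x - d x x' \<le> bump V x'"
    unfolding bump_def[of V x']
  proof (rule cInf_greatest)
    fix z assume "z \<in> insert 1 (d x' ` (M - V))"
    then consider "z = 1" | y where "y \<in> M - V" "z = d x' y" by blast
    then show "bump V x - d x x' \<le> z"
    proof cases
      case 1 then show ?thesis using bump_le_1[of V x] nonneg[of x x'] by linarith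
    next
      case 2
      then show ?thesis using bump_le_dist[of y V x] triangle[of x x' y] assms by auto
    qed
  qed simp
  then show ?thesis by linarith
qed

lemma continuous_map_bump: "continuous_map mtopology euclideanreal (bump V)"
proof (rule Lipschitz_imp_continuous_map_real[of _ 1], intro ballI)
  fix x y assume "x \<in> M" "y \<in> M"
  then show "\<bar>bump V x - bump V y\<bar> \<le> 1 * d x y"
    using bump_Lipschitz[of x y V] bump_Lipschitz[of y x V] commute[of x y] by linarith
qed

lemma partition_of_unity:
  assumes fin: "finite \<V>" and opn: "\<forall>V\<in>\<V>. openin mtopology V" and cov: "\<Union>\<V> = M"
  obtains \<phi> where "\<And>V. continuous_map mtopology euclideanreal (\<phi> V)"
    and "\<And>V x. x \<in> M \<Longrightarrow> 0 \<le> \<phi> V x" and "\<And>V x. x \<in> M - V \<Longrightarrow> \<phi> V x = 0"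
    and "\<And>V x. V \<in> \<V> \<Longrightarrow> x \<in> V \<Longrightarrow> 0 < \<phi> V x"
    and "\<And>x. x \<in> M \<Longrightarrow> (\<Sum>V\<in>\<V>. \<phi> V x) = 1"
proof
  define S where "S x = (\<Sum>V\<in>\<V>. bump V x)" for x
  have S_pos: "S x > 0" if xM: "x \<in> M" for x
  proof -
    obtain V where V: "V \<in> \<V>" "x \<in> V" using cov xM by blast
    then have "bump V x > 0" using bump_pos opn by blast
    then show ?thesis
      unfolding S_def by (rule sum_pos2[OF fin V(1)]) (rule bump_nonneg)
  qed
  have S_cont: "continuous_map mtopology euclideanreal S"
    unfolding S_def using fin by (intro continuous_map_sum continuous_map_bump)
  show "continuous_map mtopology euclideanreal (\<lambda>x. bump V x / S x)" for V
  proof (rule continuous_map_real_divide[OF continuous_map_bump S_cont])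
    show "x \<in> topspace mtopology \<Longrightarrow> S x \<noteq> 0" for x using S_pos[of x] by simp
  qed
  show "x \<in> M \<Longrightarrow> 0 \<le> bump V x / S x" for V x
    using S_pos[of x] bump_nonneg[of V x] by simp
  show "x \<in> M - V \<Longrightarrow> bump V x / S x = 0" for V x
    using bump_eq_0[of x V] by simp
  show "V \<in> \<V> \<Longrightarrow> x \<in> V \<Longrightarrow> 0 < bump V x / S x" for V x
  proof -
    assume "V \<in> \<V>" "x \<in> V"
    then have "x \<in> M" "bump V x > 0" using cov opn bump_pos by auto
    then show ?thesis using S_pos[of x] by simp
  qed
  show "x \<in> M \<Longrightarrow> (\<Sum>V\<in>\<V>. bump V x / S x) = 1" for x
    using S_pos[of x] by (simp add: S_def sum_divide_distrib[symmetric])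
qed

text \<open>\<open>g\<close> is an \<open>r\<close>-map (points with equal images are closer than \<open>r\<close>) with modulus \<open>\<delta>\<close>; unlike
  the pointwise condition, this survives perturbations of \<open>g\<close> that are small relative to \<open>\<delta>\<close>.\<close>
definition uniform_r_map :: "nat \<Rightarrow> ('a \<Rightarrow> nat \<Rightarrow> real) \<Rightarrow> real \<Rightarrow> real \<Rightarrow> bool" where
  "uniform_r_map N g r \<delta> \<longleftrightarrow> (\<forall>x\<in>M. \<forall>y\<in>M. (\<Sum>i<N. \<bar>g x i - g y i\<bar>) < \<delta> \<longrightarrow> d x y < r)"

lemma r_map_imp_uniform_r_map:
  assumes cpt: "compact_space mtopology" and h: "continuous_coords mtopology N h"
    and r_map: "\<forall>x\<in>M. \<forall>y\<in>M. (\<forall>i<N. h x i = h y i) \<longrightarrow> d x y < r"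
  shows "\<exists>\<delta>>0. uniform_r_map N h r \<delta>"
proof -
  let ?P = "prod_topology mtopology mtopology"
  define F where "F p = (\<Sum>i<N. \<bar>h (fst p) i - h (snd p) i\<bar>)" for p
  have "continuous_map ?P euclideanreal (\<lambda>p. h (fst p) i)"
    "continuous_map ?P euclideanreal (\<lambda>p. h (snd p) i)" if "i < N" for i
    using h that continuous_map_of_fst[of mtopology mtopology euclideanreal "\<lambda>x. h x i"]
      continuous_map_of_snd[of mtopology mtopology euclideanreal "\<lambda>x. h x i"]
    by (auto simp: continuous_coords_def o_def)
  then have "continuous_coords ?P N (\<lambda>p. h (fst p))" "continuous_coords ?P N (\<lambda>p. h (snd p))"
    by (simp_all add: continuous_coords_def)
  then have F_cont: "continuous_map ?P euclideanreal F"
    unfolding F_def by (rule continuous_map_sum_abs_diff_coords)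
  have "continuous_map ?P euclideanreal (case_prod d)"
    using continuous_map_metric[of "metric (M, d)"] by simp
  define K where "K = {p \<in> topspace ?P. case_prod d p \<in> {r..}}"
  have "closedin ?P K"
    unfolding K_def by (rule closedin_continuous_map_preimage) (fact, simp)
  then have "compactin ?P K"
    using cpt by (simp add: closedin_compact_space compact_space_prod_topology)
  show ?thesis
  proof (cases "K = {}")
    case True
    then have "uniform_r_map N h r 1" by (auto simp: uniform_r_map_def K_def not_le)
    then show ?thesis by (intro exI[of _ 1]) simp
  next
    case False
    text \<open>The continuous function \<open>F\<close> attains a minimum \<open>m\<close> on the compact set \<open>K\<close> of far-apart pairs.\<close>
    have "compact (F ` K)" using image_compactin[OF \<open>compactin ?P K\<close> F_cont] by simp
    with False obtain m where m: "m \<in> F ` K" "\<forall>z\<in>F ` K. m \<le> z"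
      using compact_attains_inf by blast
    then obtain p where p: "p \<in> K" "m = F p" by blast
    have "m > 0"
    proof (rule ccontr)
      assume "\<not> m > 0"
      moreover have "m \<ge> 0" using p by (simp add: F_def sum_nonneg)
      ultimately have "F p = 0" using p by simp
      then have "\<forall>i<N. h (fst p) i = h (snd p) i"
        unfolding F_def by (subst (asm) sum_nonneg_eq_0_iff) auto
      moreover have "fst p \<in> M" "snd p \<in> M" "r \<le> d (fst p) (snd p)"
        using p by (auto simp: K_def case_prod_beta)
      ultimately show False using r_map by fastforce
    qed
    moreover have "uniform_r_map N h r m"
      unfolding uniform_r_map_def
    proof (intro ballI impI)
      fix x y assume xy: "x \<in> M" "y \<in> M" and lt: "(\<Sum>i<N. \<bar>h x i - h y i\<bar>) < m"
      show "d x y < r"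
      proof (rule ccontr)
        assume "\<not> d x y < r"
        with xy have "(x, y) \<in> K" by (auto simp: K_def)
        then have "m \<le> F (x, y)" using m(2) by blast
        with lt show False by (simp add: F_def)
      qed
    qed
    ultimately show ?thesis by blast
  qed
qed

lemma fine_cover_of_order:
  assumes cpt: "compact_space mtopology" and dim: "covering_dim_le mtopology n"
    and g: "continuous_coords mtopology N g" and "\<eta> > 0" "r > 0"
  shows "\<exists>\<V>. finite \<V> \<and> (\<forall>V\<in>\<V>. openin mtopology V) \<and> \<Union>\<V> = M \<and>
     (\<forall>V\<in>\<V>. \<forall>y\<in>V. \<forall>z\<in>V. d y z < r \<and> (\<forall>i<N. \<bar>g y i - g z i\<bar> < \<eta>)) \<and>
     (\<forall>x\<in>M. card {V\<in>\<V>. x \<in> V} \<le> n + 1)"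
proof -
  define G where "G x y = (\<Sum>i<N. \<bar>g y i - g x i\<bar>)" for x y
  define B where "B x = mball x (r/2) \<inter> {y \<in> topspace mtopology. G x y \<in> {..<\<eta>/2}}" for x
  have G_cont: "continuous_map mtopology euclideanreal (G x)" for x
    unfolding G_def using continuous_map_sum_abs_diff_coords[OF g, of "\<lambda>_. g x"]
    by (simp add: continuous_coords_def)
  have B_open: "openin mtopology (B x)" for x
    unfolding B_def by (intro openin_Int openin_mball openin_continuous_map_preimage[OF G_cont]) auto
  have B_small: "d y z < r \<and> (\<forall>i<N. \<bar>g y i - g z i\<bar> < \<eta>)" if "y \<in> B x" "z \<in> B x" for x y z
  proof -
    have y: "y \<in> M" "x \<in> M" "d x y < r/2" "G x y < \<eta>/2"
     and z: "z \<in> M" "d x z < r/2" "G x z < \<eta>/2" using that by (auto simp: B_def)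
    have "d y z < r" using triangle[of y x z] commute[of x y] y z by linarith
    moreover have "\<bar>g y i - g z i\<bar> < \<eta>" if "i < N" for i
    proof -
      have "\<bar>g y i - g x i\<bar> \<le> G x y" "\<bar>g z i - g x i\<bar> \<le> G x z"
        unfolding G_def using that by (intro member_le_sum; simp)+
      with y z show ?thesis by linarith
    qed
    ultimately show ?thesis by blast
  qed
  have "x \<in> B x" if "x \<in> M" for x using that assms(4,5) by (simp add: B_def G_def)
  then have "topspace mtopology \<subseteq> \<Union>(B ` M)" by auto
  then have "\<exists>F. finite F \<and> F \<subseteq> B ` M \<and> topspace mtopology \<subseteq> \<Union>F"
    using cpt[unfolded compact_space_alt, rule_format, of "B ` M"] B_open by blast
  then obtain F where F: "finite F" "F \<subseteq> B ` M" "M \<subseteq> \<Union>F" by auto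
  have "\<Union>F \<subseteq> M"
  proof
    fix y assume "y \<in> \<Union>F"
    then obtain x where "y \<in> B x" using F(2) by blast
    then show "y \<in> M" by (simp add: B_def)
  qed
  with F(3) have "\<Union>F = M" by (rule subset_antisym[rotated])
  moreover have "\<forall>U\<in>F. openin mtopology U" using F(2) B_open by blast
  ultimately have "finite F \<and> (\<forall>U\<in>F. openin mtopology U) \<and> \<Union>F = M" using F(1) by blast
  then obtain \<V> where V: "finite \<V>" "\<forall>V\<in>\<V>. openin mtopology V" "\<Union>\<V> = M"
    "\<forall>V\<in>\<V>. \<exists>U\<in>F. V \<subseteq> U" "\<forall>x\<in>M. card {V\<in>\<V>. x \<in> V} \<le> n + 1"
    using dim[unfolded covering_dim_le_def topspace_mtopology, THEN spec[of _ F], THEN mp] by auto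
  have "\<forall>V\<in>\<V>. \<forall>y\<in>V. \<forall>z\<in>V. d y z < r \<and> (\<forall>i<N. \<bar>g y i - g z i\<bar> < \<eta>)"
  proof (intro ballI)
    fix V y z assume "V \<in> \<V>" "y \<in> V" "z \<in> V"
    then obtain U where "U \<in> F" "V \<subseteq> U" using V(4) by blast
    then obtain x where "V \<subseteq> B x" using F(2) by blast
    with \<open>y \<in> V\<close> \<open>z \<in> V\<close> show "d y z < r \<and> (\<forall>i<N. \<bar>g y i - g z i\<bar> < \<eta>)"
      by (intro B_small) auto
  qed
  with V(1,2,3,5) show ?thesis by (intro exI[of _ \<V>] conjI)
qed

text \<open>The map \<open>h = \<Sum>\<^sub>V \<phi>\<^sub>V v\<^sub>V\<close> into the nerve of the cover, with vertices \<open>v\<^sub>V\<close> in general position near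
  values of \<open>g\<close> on \<open>V\<close>: if \<open>h x = h y\<close>, the at most \<open>2n + 2 \<le> N + 1\<close> vertices of the sets containing
  \<open>x\<close> or \<open>y\<close> are affinely dependent unless some set of the cover contains both points.\<close>
lemma exists_near_r_map:
  assumes fin: "finite \<V>" and opn: "\<forall>V\<in>\<V>. openin mtopology V" and cov: "\<Union>\<V> = M"
    and small: "\<forall>V\<in>\<V>. \<forall>y\<in>V. \<forall>z\<in>V. d y z < r \<and> (\<forall>i<N. \<bar>g y i - g z i\<bar> < \<eta>/2)"
    and order: "\<forall>x\<in>M. card {V\<in>\<V>. x \<in> V} \<le> n + 1"
    and N: "2 * n + 1 \<le> N" and "\<eta> > 0"
  shows "\<exists>h. continuous_coords mtopology N h \<and> (\<forall>x\<in>M. \<forall>i<N. \<bar>h x i - g x i\<bar> \<le> \<eta>) \<and>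
     (\<forall>x\<in>M. \<forall>y\<in>M. (\<forall>i<N. h x i = h y i) \<longrightarrow> d x y < r)"
proof -
  obtain \<phi> where \<phi>_cont: "\<And>V. continuous_map mtopology euclideanreal (\<phi> V)"
    and \<phi>_nonneg: "\<And>V x. x \<in> M \<Longrightarrow> 0 \<le> \<phi> V x" and \<phi>_zero: "\<And>V x. x \<in> M - V \<Longrightarrow> \<phi> V x = 0"
    and \<phi>_pos: "\<And>V x. V \<in> \<V> \<Longrightarrow> x \<in> V \<Longrightarrow> 0 < \<phi> V x"
    and \<phi>_sum: "\<And>x. x \<in> M \<Longrightarrow> (\<Sum>V\<in>\<V>. \<phi> V x) = 1"
    using partition_of_unity[OF fin opn cov] by blast
  define p where "p V = (SOME q. q \<in> V)" for V :: "'a set"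
  obtain v where v: "\<forall>V\<in>\<V>. \<forall>i<N. \<bar>v V i - g (p V) i\<bar> < \<eta>/2" "general_position N \<V> v"
    using exists_near_general_position[OF fin, of "\<eta>/2" N "\<lambda>V. g (p V)"] N \<open>\<eta> > 0\<close> by auto
  define h where "h x i = (\<Sum>V\<in>\<V>. \<phi> V x * v V i)" for x i
  have "continuous_coords mtopology N h"
    unfolding continuous_coords_def h_def using fin
    by (intro allI impI continuous_map_sum continuous_map_real_mult \<phi>_cont) auto
  moreover have "\<bar>h x i - g x i\<bar> \<le> \<eta>" if x: "x \<in> M" and i: "i < N" for x i
    unfolding h_def
  proof (rule abs_convex_combination_diff_le[OF fin \<phi>_nonneg[OF x] \<phi>_sum[OF x]])
    fix V assume V: "V \<in> \<V>" and "\<phi> V x \<noteq> 0"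
    then have "x \<in> V" using \<phi>_zero x by blast
    then have "p V \<in> V" unfolding p_def by (rule someI)
    then have "\<bar>v V i - g (p V) i\<bar> < \<eta>/2" "\<bar>g (p V) i - g x i\<bar> < \<eta>/2"
      using v(1) small V \<open>x \<in> V\<close> i by blast+
    then show "\<bar>v V i - g x i\<bar> \<le> \<eta>" by linarith
  qed
  moreover have "d x y < r" if x: "x \<in> M" and y: "y \<in> M" and eq: "\<forall>i<N. h x i = h y i" for x y
  proof -
    define J where "J = {V\<in>\<V>. x \<in> V} \<union> {V\<in>\<V>. y \<in> V}"
    define l where "l V = \<phi> V x - \<phi> V y" for V
    have "card {V\<in>\<V>. x \<in> V} \<le> n + 1" "card {V\<in>\<V>. y \<in> V} \<le> n + 1"
      using order x y by blast+
    then have J: "J \<subseteq> \<V>" "card J \<le> N + 1"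
      using card_Un_le[of "{V\<in>\<V>. x \<in> V}" "{V\<in>\<V>. y \<in> V}"] N by (auto simp: J_def)
    have out: "\<forall>V\<in>\<V> - J. l V = 0"
      using \<phi>_zero x y by (auto simp: J_def l_def)
    have "(\<Sum>V\<in>J. l V) = (\<Sum>V\<in>\<V>. l V)"
      using sum.mono_neutral_left[OF fin J(1) out] .
    also have "\<dots> = 0" using \<phi>_sum[OF x] \<phi>_sum[OF y] by (simp add: l_def sum_subtractf)
    finally have l_sum: "(\<Sum>V\<in>J. l V) = 0" .
    have l_comb: "(\<Sum>V\<in>J. l V * v V i) = 0" if "i < N" for i
    proof -
      have "(\<Sum>V\<in>J. l V * v V i) = (\<Sum>V\<in>\<V>. l V * v V i)"
        by (rule sum.mono_neutral_left[OF fin J(1)]) (use out in simp)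
      also have "\<dots> = h x i - h y i"
        by (simp add: l_def h_def sum_subtractf left_diff_distrib)
      finally show ?thesis using eq that by simp
    qed
    obtain V where V: "V \<in> \<V>" "x \<in> V" using cov x by blast
    then have "l V = 0" using general_positionD[OF v(2) J l_sum] l_comb by (simp add: J_def)
    then have "\<phi> V y > 0" using \<phi>_pos[OF V] by (simp add: l_def)
    then have "y \<in> V" using \<phi>_zero[of y V] y by force
    then show ?thesis using small V by blast
  qed
  ultimately show ?thesis by blast
qed

lemma exists_near_uniform_r_map:
  assumes cpt: "compact_space mtopology" and dim: "covering_dim_le mtopology n"
    and N: "2 * n + 1 \<le> N" and g: "continuous_coords mtopology N g" and "\<eta> > 0" "r > 0"
  shows "\<exists>h \<delta>. continuous_coords mtopology N h \<and> (\<forall>x\<in>M. \<forall>i<N. \<bar>h x i - g x i\<bar> \<le> \<eta>) \<and>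
     \<delta> > 0 \<and> uniform_r_map N h r \<delta>"
proof -
  obtain \<V> where V: "finite \<V>" "\<forall>V\<in>\<V>. openin mtopology V" "\<Union>\<V> = M"
     "\<forall>V\<in>\<V>. \<forall>y\<in>V. \<forall>z\<in>V. d y z < r \<and> (\<forall>i<N. \<bar>g y i - g z i\<bar> < \<eta>/2)"
     "\<forall>x\<in>M. card {V\<in>\<V>. x \<in> V} \<le> n + 1"
    using fine_cover_of_order[OF cpt dim g, of "\<eta>/2" r] assms(5,6) by auto
  obtain h where h: "continuous_coords mtopology N h" "\<forall>x\<in>M. \<forall>i<N. \<bar>h x i - g x i\<bar> \<le> \<eta>"
     "\<forall>x\<in>M. \<forall>y\<in>M. (\<forall>i<N. h x i = h y i) \<longrightarrow> d x y < r"
    using exists_near_r_map[OF V N \<open>\<eta> > 0\<close>] by blast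
  obtain \<delta> where "\<delta> > 0" "uniform_r_map N h r \<delta>"
    using r_map_imp_uniform_r_map[OF cpt h(1,3)] by blast
  with h(1,2) show ?thesis by blast
qed

lemma uniform_r_map_perturb:
  assumes "uniform_r_map N g r \<delta>" and close: "\<forall>x\<in>M. \<forall>i<N. \<bar>g' x i - g x i\<bar> \<le> \<epsilon>"
    and "2 * real N * \<epsilon> < \<delta>" and x: "x \<in> M" and y: "y \<in> M" and eq: "\<forall>i<N. g' x i = g' y i"
  shows "d x y < r"
proof -
  have "(\<Sum>i<N. \<bar>g x i - g y i\<bar>) \<le> (\<Sum>i<N. 2 * \<epsilon>)"
  proof (rule sum_mono)
    fix i assume "i \<in> {..<N}"
    then have "\<bar>g' x i - g x i\<bar> \<le> \<epsilon>" "\<bar>g' y i - g y i\<bar> \<le> \<epsilon>" "g' x i = g' y i"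
      using close x y eq by auto
    then show "\<bar>g x i - g y i\<bar> \<le> 2 * \<epsilon>" by linarith
  qed
  also have "\<dots> < \<delta>" using assms(3) by simp
  finally show "d x y < r" using assms(1) x y by (simp add: uniform_r_map_def)
qed

text \<open>Each map is an \<open>1/(k+1)\<close>-map with modulus \<open>8N\<rho>\<^sub>k\<close>, and later corrections add up to at
  most \<open>2\<rho>\<^sub>k\<close>, which is too little to destroy this property in the limit.\<close>
lemma exists_r_map_sequence:
  assumes cpt: "compact_space mtopology" and dim: "covering_dim_le mtopology n"
    and N: "2 * n + 1 \<le> N"
  obtains gs \<rho> where "\<And>k. continuous_coords mtopology N (gs k)" "gs 0 = (\<lambda>_ _. 0)" "\<rho> 0 = 1 / 2"
    "\<And>k. \<rho> k > 0" "\<And>k. \<rho> (Suc k) \<le> \<rho> k / 2"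
    "\<And>k x i. x \<in> M \<Longrightarrow> i < N \<Longrightarrow> \<bar>gs (Suc k) x i - gs k x i\<bar> \<le> \<rho> k"
    "\<And>k. uniform_r_map N (gs (Suc k)) (1 / real (Suc k)) (8 * real N * \<rho> (Suc k))"
proof -
  define P where "P k q \<longleftrightarrow> continuous_coords mtopology N (fst q) \<and> snd q > 0 \<and>
      (k = 0 \<longrightarrow> q = (\<lambda>_ _. 0, 1 / 2))"
    for k :: nat and q :: "('a \<Rightarrow> nat \<Rightarrow> real) \<times> real"
  define Q where "Q k q q' \<longleftrightarrow> (\<forall>x\<in>M. \<forall>i<N. \<bar>fst q' x i - fst q x i\<bar> \<le> snd q) \<and>
      snd q' \<le> snd q / 2 \<and> uniform_r_map N (fst q') (1 / real (Suc k)) (8 * real N * snd q')"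
    for k :: nat and q q' :: "('a \<Rightarrow> nat \<Rightarrow> real) \<times> real"
  have "\<exists>q'. P (Suc k) q' \<and> Q k q q'" if "P k q" for k q
  proof -
    have "\<exists>h \<delta>. continuous_coords mtopology N h \<and> (\<forall>x\<in>M. \<forall>i<N. \<bar>h x i - fst q x i\<bar> \<le> snd q) \<and>
        \<delta> > 0 \<and> uniform_r_map N h (1 / real (Suc k)) \<delta>"
      by (rule exists_near_uniform_r_map[OF cpt dim]) (use that N in \<open>simp_all add: P_def\<close>)
    then obtain h \<delta> where h: "continuous_coords mtopology N h" "\<forall>x\<in>M. \<forall>i<N. \<bar>h x i - fst q x i\<bar> \<le> snd q"
        "\<delta> > 0" "uniform_r_map N h (1 / real (Suc k)) \<delta>"
      by blast
    define \<rho> where "\<rho> = min (snd q / 2) (\<delta> / (8 * real N))"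
    have "8 * real N * \<rho> \<le> 8 * real N * (\<delta> / (8 * real N))"
      unfolding \<rho>_def by (intro mult_left_mono) auto
    also have "\<dots> = \<delta>" using N by simp
    finally have "uniform_r_map N h (1 / real (Suc k)) (8 * real N * \<rho>)"
      using h(4) by (fastforce simp: uniform_r_map_def)
    moreover have "\<rho> > 0" using that h(3) N by (simp add: \<rho>_def P_def)
    ultimately show ?thesis using h(1,2) by (intro exI[of _ "(h, \<rho>)"]) (simp add: P_def Q_def \<rho>_def)
  qed
  moreover have "P 0 (\<lambda>_ _. 0, 1 / 2)" by (simp add: P_def continuous_coords_def)
  ultimately obtain f where f: "\<And>k. P k (f k)" "\<And>k. Q k (f k) (f (Suc k))"
    using dependent_nat_choice[of P Q] by blast
  show thesis
    by (rule that[of "\<lambda>k. fst (f k)" "\<lambda>k. snd (f k)"]) (use f in \<open>simp_all add: P_def Q_def\<close>)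
qed

theorem exists_injective_continuous_coords:
  assumes cpt: "compact_space mtopology" and dim: "covering_dim_le mtopology n"
  shows "\<exists>g. continuous_coords mtopology (2 * n + 1) g \<and> (\<forall>x\<in>M. \<forall>i<2 * n + 1. \<bar>g x i\<bar> \<le> 1) \<and>
           (\<forall>x\<in>M. \<forall>y\<in>M. (\<forall>i<2 * n + 1. g x i = g y i) \<longrightarrow> x = y)"
proof -
  define N where "N = 2 * n + 1"
  obtain gs \<rho> where gs_cont: "\<And>k. continuous_coords mtopology N (gs k)"
    and start: "gs 0 = (\<lambda>_ _. 0)" "\<rho> 0 = 1 / 2" and \<rho>_pos: "\<And>k. \<rho> k > 0"
    and halve: "\<And>k. \<rho> (Suc k) \<le> \<rho> k / 2"
    and step: "\<And>k x i. x \<in> M \<Longrightarrow> i < N \<Longrightarrow> \<bar>gs (Suc k) x i - gs k x i\<bar> \<le> \<rho> k"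
    and r_map: "\<And>k. uniform_r_map N (gs (Suc k)) (1 / real (Suc k)) (8 * real N * \<rho> (Suc k))"
    by (rule exists_r_map_sequence[where N = N, OF cpt dim]) (auto simp: N_def)
  define g where "g x i = lim (\<lambda>k. gs k x i)" for x i
  have g_close: "\<bar>g x i - gs k x i\<bar> \<le> 2 * \<rho> k" if "x \<in> M" "i < N" for x i k
    unfolding g_def by (rule halving_steps_limit(2)[of "\<lambda>k. gs k x i", OF step[OF that] halve])
  have "\<rho> \<longlonglongrightarrow> 0" using halving_imp_LIMSEQ_zero[of \<rho>, OF halve] \<rho>_pos less_imp_le by blast
  have "continuous_map mtopology euclideanreal (\<lambda>x. g x i)" if i: "i < N" for i
  proof -
    have "continuous_map mtopology Met_TC.mtopology (\<lambda>x. g x i)"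
    proof (rule Met_TC.continuous_map_uniform_limit[where F = sequentially and f = "\<lambda>k x. gs k x i"])
      show "\<forall>\<^sub>F k in sequentially. continuous_map mtopology Met_TC.mtopology (\<lambda>x. gs k x i)"
        using gs_cont i by (simp add: continuous_coords_def)
      fix \<epsilon> :: real assume "0 < \<epsilon>"
      then have "\<forall>\<^sub>F k in sequentially. 2 * \<rho> k < \<epsilon>"
        using order_tendstoD(2)[OF tendsto_mult_right_zero[OF \<open>\<rho> \<longlonglongrightarrow> 0\<close>, of 2]] by simp
      then show "\<forall>\<^sub>F k in sequentially. \<forall>x\<in>topspace mtopology. g x i \<in> UNIV \<and> dist (gs k x i) (g x i) < \<epsilon>"
      proof (rule eventually_mono)
        fix k assume "2 * \<rho> k < \<epsilon>"
        then show "\<forall>x\<in>topspace mtopology. g x i \<in> UNIV \<and> dist (gs k x i) (g x i) < \<epsilon>"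
          using g_close[OF _ i, of _ k] by (fastforce simp: dist_real_def abs_minus_commute)
      qed
    qed simp
    then show ?thesis by simp
  qed
  then have "continuous_coords mtopology N g" by (simp add: continuous_coords_def)
  moreover have "\<bar>g x i\<bar> \<le> 1" if "x \<in> M" "i < N" for x i
    using g_close[OF that, of 0] start by simp
  moreover have "x = y" if x: "x \<in> M" and y: "y \<in> M" and eq: "\<forall>i<N. g x i = g y i" for x y
  proof -
    have small: "d x y < 1 / real (Suc k)" for k
    proof (rule uniform_r_map_perturb[OF _ _ _ x y eq])
      show "uniform_r_map N (gs (Suc k)) (1 / real (Suc k)) (8 * real N * \<rho> (Suc k))"
        by (rule r_map)
      show "\<forall>x\<in>M. \<forall>i<N. \<bar>g x i - gs (Suc k) x i\<bar> \<le> 2 * \<rho> (Suc k)" using g_close by blast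
      show "2 * real N * (2 * \<rho> (Suc k)) < 8 * real N * \<rho> (Suc k)"
        using \<rho>_pos[of "Suc k"] by (simp add: N_def)
    qed
    have "d x y \<le> 0"
    proof (rule ccontr)
      assume "\<not> d x y \<le> 0"
      then obtain k where "inverse (real (Suc k)) < d x y" using reals_Archimedean[of "d x y"] by auto
      with small[of k] show False by (simp add: inverse_eq_divide)
    qed
    with x y show "x = y" using nonneg[of x y] by simp
  qed
  ultimately show ?thesis unfolding N_def by blast
qed

section \<open>Approximating a metric by sup-metrics\<close>

lemma exists_coords_close_to_metric:
  assumes cpt: "compact_space mtopology" and "\<epsilon> > 0" and "N \<ge> 1"
    and g: "continuous_coords mtopology N g" and g_bdd: "\<forall>x\<in>M. \<forall>i<N. \<bar>g x i\<bar> \<le> 1"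
    and g_inj: "\<forall>x\<in>M. \<forall>y\<in>M. (\<forall>i<N. g x i = g y i) \<longrightarrow> x = y"
  shows "\<exists>N' f. N' \<ge> 1 \<and> continuous_coords mtopology N' f \<and>
     (\<forall>x\<in>M. \<forall>y\<in>M. (\<forall>j<N'. f x j = f y j) \<longrightarrow> x = y) \<and>
     (\<forall>x\<in>M. \<forall>y\<in>M. \<bar>d x y - (MAX j\<in>{..<N'}. \<bar>f x j - f y j\<bar>)\<bar> \<le> \<epsilon>)"
proof -
  obtain K where K: "finite K" "K \<subseteq> M" "M \<subseteq> (\<Union>p\<in>K. mball p (\<epsilon>/2))"
    using cpt \<open>\<epsilon> > 0\<close> unfolding compact_space_eq_mcomplete_mtotally_bounded mtotally_bounded_def
    by (meson half_gt_zero order_refl)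
  obtain ps where ps: "set ps = K" using finite_list[OF K(1)] by blast
  define m where "m = length ps"
  have ps_M: "ps ! j \<in> M" if "j < m" for j using that ps K(2) m_def nth_mem by blast
  define f where "f x j = (if j < m then d x (ps ! j) else \<epsilon>/2 * g x (j - m))" for x j
  have dist_coord: "\<bar>d x p - d y p\<bar> \<le> d x y" if "x \<in> M" "y \<in> M" "p \<in> M" for x y p
    using mdist_reverse_triangle[of x p y] that by (simp add: commute)
  have "continuous_coords mtopology (m + N) f"
    unfolding continuous_coords_def
  proof (intro allI impI)
    fix j assume j: "j < m + N"
    show "continuous_map mtopology euclideanreal (\<lambda>x. f x j)"
    proof (cases "j < m")
      case True
      then show ?thesis
        unfolding f_def using dist_coord ps_M[OF True]
        by (simp add: Lipschitz_imp_continuous_map_real[of _ 1])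
    next
      case False
      then have "continuous_map mtopology euclideanreal (\<lambda>x. g x (j - m))"
        using g j by (simp add: continuous_coords_def)
      then have "continuous_map mtopology euclideanreal (\<lambda>x. \<epsilon>/2 * g x (j - m))"
        by (rule continuous_map_real_mult_left)
      with False show ?thesis unfolding f_def by simp
    qed
  qed
  moreover have "x = y" if "x \<in> M" "y \<in> M" "\<forall>j<m + N. f x j = f y j" for x y
  proof -
    have "g x i = g y i" if "i < N" for i
      using \<open>\<forall>j<m + N. f x j = f y j\<close>[rule_format, of "m + i"] that \<open>\<epsilon> > 0\<close> by (simp add: f_def)
    then show ?thesis using g_inj that by blast
  qed
  moreover have "\<bar>d x y - (MAX j\<in>{..<m + N}. \<bar>f x j - f y j\<bar>)\<bar> \<le> \<epsilon>" if x: "x \<in> M" and y: "y \<in> M" for x y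
  proof (rule abs_diff_Max_le)
    show "\<forall>j<m + N. \<bar>f x j - f y j\<bar> \<le> d x y + \<epsilon>"
    proof (intro allI impI)
      fix j assume j: "j < m + N"
      show "\<bar>f x j - f y j\<bar> \<le> d x y + \<epsilon>"
      proof (cases "j < m")
        case True
        then show ?thesis using dist_coord[OF x y ps_M[OF True]] \<open>\<epsilon> > 0\<close> by (simp add: f_def)
      next
        case False
        then have "\<bar>g x (j - m)\<bar> \<le> 1" "\<bar>g y (j - m)\<bar> \<le> 1" using g_bdd x y j by auto
        then have bound: "\<bar>g x (j - m) - g y (j - m)\<bar> \<le> 2" by linarith
        have diff: "f x j - f y j = \<epsilon>/2 * (g x (j - m) - g y (j - m))"
          using False by (simp add: f_def algebra_simps)
        have "\<bar>f x j - f y j\<bar> = \<epsilon>/2 * \<bar>g x (j - m) - g y (j - m)\<bar>"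
          unfolding diff abs_mult using \<open>\<epsilon> > 0\<close> by simp
        also have "\<dots> \<le> \<epsilon>/2 * 2" using bound \<open>\<epsilon> > 0\<close> by (intro mult_left_mono) auto
        finally have "\<bar>f x j - f y j\<bar> \<le> \<epsilon>" by simp
        then show ?thesis using nonneg[of x y] by linarith
      qed
    qed
    obtain p where p: "p \<in> K" "d p x < \<epsilon>/2" using K(3) x by auto
    then obtain j where j: "j < m" "ps ! j = p" using ps by (auto simp: m_def in_set_conv_nth)
    have "d x y \<le> d x p + d p y" using triangle x y p K(2) by blast
    then have "d x y - \<epsilon> \<le> \<bar>f x j - f y j\<bar>" using p j by (simp add: f_def commute)
    with j show "\<exists>j<m + N. d x y - \<epsilon> \<le> \<bar>f x j - f y j\<bar>" by (intro exI[of _ j]) simp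
  qed
  ultimately show ?thesis using \<open>N \<ge> 1\<close> by (intro exI[of _ "m + N"] exI[of _ f]) auto
qed

end

theorem theorem2p2:
  fixes T :: "'a topology"
  assumes "compact_space T" and "metrizable_space T" and "finite_dimensional T"
  shows "\<forall>d\<in>Met T. \<forall>\<epsilon>>0. \<exists>e\<in>{e\<in>Met T. linf_embeddable T e}. DX T d e < ereal \<epsilon>"
proof (intro ballI allI impI)
  fix d and \<epsilon> :: real assume d: "d \<in> Met T" and "\<epsilon> > 0"
  then interpret D: Metric_space "topspace T" d by (simp add: Met_def)
  have T_eq: "D.mtopology = T" using d by (simp add: Met_def)
  obtain n where "covering_dim_le T n" using assms(3) by (auto simp: finite_dimensional_def)
  then obtain g where "continuous_coords T (2 * n + 1) g" "\<forall>x\<in>topspace T. \<forall>i<2 * n + 1. \<bar>g x i\<bar> \<le> 1"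
      "\<forall>x\<in>topspace T. \<forall>y\<in>topspace T. (\<forall>i<2 * n + 1. g x i = g y i) \<longrightarrow> x = y"
    using D.exists_injective_continuous_coords[unfolded T_eq, OF assms(1)] by blast
  then obtain N f where N: "N \<ge> 1" "continuous_coords T N f"
      "\<forall>x\<in>topspace T. \<forall>y\<in>topspace T. (\<forall>j<N. f x j = f y j) \<longrightarrow> x = y"
      and close: "\<forall>x\<in>topspace T. \<forall>y\<in>topspace T. \<bar>d x y - (MAX j\<in>{..<N}. \<bar>f x j - f y j\<bar>)\<bar> \<le> \<epsilon>/2"
    using D.exists_coords_close_to_metric[unfolded T_eq, OF assms(1), of "\<epsilon>/2" "2 * n + 1" g]
      \<open>\<epsilon> > 0\<close> by auto
  define e where "e x y = (MAX j\<in>{..<N}. \<bar>f x j - f y j\<bar>)" for x y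
  have "e \<in> Met T" unfolding e_def by (rule Max_coords_in_Met[OF assms(1) N])
  moreover have "linf_embeddable T e" unfolding linf_embeddable_def e_def using N(1) by blast
  moreover have "DX T d e \<le> ereal (\<epsilon>/2)"
    unfolding DX_def e_def by (rule SUP_least) (use close in auto)
  then have "DX T d e < ereal \<epsilon>" using \<open>\<epsilon> > 0\<close> by (simp add: order.strict_trans1)
  ultimately show "\<exists>e\<in>{e\<in>Met T. linf_embeddable T e}. DX T d e < ereal \<epsilon>" by blast
qed

end
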